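(* Let $X$ be a locally compact Hausdorff topological space with a basis of compact open sets, $G$ a discrete group, $\phi=(\phi_g,X_g,X)_{g\in G}$ a partial action of $G$ on $X$ (with $X_g$ open), and $K$ a field. Then $V\mapsto C_K(V)\rtimes_{\phi|_V}G$ is a bijection between the open invariant subsets of $X$ and the graded ideals of $C_K(X)\rtimes_\phi G$.
   Context: A partial action of $G$ (identity $\varepsilon$) on a topological space $X$ is $(\phi_g,X_g,X)_{g\in G}$ with $X_g$ open, homeomorphisms $\phi_g:X_{g^{-1}}\to X_g$, and (i) $X_\varepsilon=X$, $\phi_\varepsilon=\operatorname{id}$; (ii) $\phi_g(X_{g^{-1}}\cap X_h)=X_g\cap X_{gh}$; (iii) $\phi_g\phi_h(x)=\phi_{gh}(x)$ for $x\in X_{h^{-1}}\cap X_{h^{-1}g^{-1}}$. $V\subseteq X$ is invariant if $\phi_{g^{-1}}(X_g\cap V)\subseteq X_{g^{-1}}\cap V$ for all $g$; then $\phi|_V=(\phi_g,V\cap X_g,V)$. $C_K(Y)$ is the algebra of compactly supported locally constant functions $Y\to K$; $C_K(W)$ for open $W$ is the ideal of functions vanishing off $W$; $\phi_g(f)=f\circ\phi_{g^{-1}}$. The partial skew group ring $C_K(X)\rtimes_\phi G$ consists of finite sums $\sum a_g\delta_g$, $a_g\in C_K(X_g)$, with product $(a_g\delta_g)(b_h\delta_h)=\phi_g(\phi_{g^{-1}}(a_g)b_h)\delta_{gh}$, graded by $\deg(a_g\delta_g)=g$; $C_K(V)\rtimes_{\phi|_V}G=\{\sum a_g\delta_g: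 a_g\in C_K(V\cap X_g)\}$ is viewed as a subset of it. An ideal is graded if it is the direct sum of its intersections with the homogeneous components. *)

theory Defs
  imports "HOL-Analysis.Analysis"
begin

text \<open>The group G is written additively via the (non-commutative) class group_add:
  identity 0, product g + h, inverse - g.  The space X is the whole type 'x.\<close>

definition locally_compact_Hausdorff_space :: "'x::t2_space itself \<Rightarrow> bool" where
  "locally_compact_Hausdorff_space _ \<longleftrightarrow>
     (\<forall>x::'x. \<exists>U C. open U \<and> compact C \<and> x \<in> U \<and> U \<subseteq> C)"

definition has_compact_open_basis :: "'x::topological_space itself \<Rightarrow> bool" where
  "has_compact_open_basis _ \<longleftrightarrow>
     (\<forall>(U::'x set) x. open U \<and> x \<in> U \<longrightarrow> (\<exists>W. open W \<and> compact W \<and> x \<in> W \<and> W \<subseteq> U))"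

definition partial_action ::
    "('g::group_add \<Rightarrow> 'x::topological_space \<Rightarrow> 'x) \<Rightarrow> ('g \<Rightarrow> 'x set) \<Rightarrow> bool" where
  "partial_action phi Xg \<longleftrightarrow>
     (\<forall>g. open (Xg g)) \<and>
     (\<forall>g. \<exists>psi. homeomorphism (Xg (- g)) (Xg g) (phi g) psi) \<and>
     Xg 0 = UNIV \<and> (\<forall>x. phi 0 x = x) \<and>
     (\<forall>g h. phi g ` (Xg (- g) \<inter> Xg h) = Xg g \<inter> Xg (g + h)) \<and>
     (\<forall>g h x. x \<in> Xg (- h) \<inter> Xg (- h + - g) \<longrightarrow> phi g (phi h x) = phi (g + h) x)"

definition invariant_set ::
    "('g::group_add \<Rightarrow> 'x \<Rightarrow> 'x) \<Rightarrow> ('g \<Rightarrow> 'x set) \<Rightarrow> 'x set \<Rightarrow> bool" where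
  "invariant_set phi Xg V \<longleftrightarrow> (\<forall>g. phi (- g) ` (Xg g \<inter> V) \<subseteq> Xg (- g) \<inter> V)"

definition CK :: "'x::topological_space set \<Rightarrow> ('x \<Rightarrow> 'k::field) set" where
  "CK W = {f. (\<forall>x. \<exists>U. open U \<and> x \<in> U \<and> (\<forall>y\<in>U. f y = f x)) \<and>
              (\<exists>C. compact C \<and> (\<forall>x. x \<notin> C \<longrightarrow> f x = 0)) \<and>
              (\<forall>x. x \<notin> W \<longrightarrow> f x = 0)}"

definition pact ::
    "('g::group_add \<Rightarrow> 'x \<Rightarrow> 'x) \<Rightarrow> ('g \<Rightarrow> 'x set) \<Rightarrow> 'g \<Rightarrow> ('x \<Rightarrow> 'k::field) \<Rightarrow> ('x \<Rightarrow> 'k)" where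
  "pact phi Xg g f = (\<lambda>x. if x \<in> Xg g then f (phi (- g) x) else 0)"

text \<open>Elements \<Sum> a_g \<delta>_g of the partial skew group ring, represented as the function g \<mapsto> a_g.\<close>
definition fsupp :: "('g \<Rightarrow> 'x \<Rightarrow> 'k::zero) \<Rightarrow> 'g set" where
  "fsupp a = {g. a g \<noteq> (\<lambda>_. 0)}"

definition skew_ring ::
    "('g::group_add \<Rightarrow> 'x::topological_space set) \<Rightarrow> 'x set \<Rightarrow> ('g \<Rightarrow> 'x \<Rightarrow> 'k::field) set" where
  "skew_ring Xg V = {a. finite (fsupp a) \<and> (\<forall>g. a g \<in> CK (V \<inter> Xg g))}"

definition skew_add :: "('g \<Rightarrow> 'x \<Rightarrow> 'k::field) \<Rightarrow> ('g \<Rightarrow> 'x \<Rightarrow> 'k) \<Rightarrow> ('g \<Rightarrow> 'x \<Rightarrow> 'k)" where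
  "skew_add a b = (\<lambda>g x. a g x + b g x)"

definition skew_neg :: "('g \<Rightarrow> 'x \<Rightarrow> 'k::field) \<Rightarrow> ('g \<Rightarrow> 'x \<Rightarrow> 'k)" where
  "skew_neg a = (\<lambda>g x. - a g x)"

text \<open>(a_g \<delta>_g)(b_h \<delta>_h) = phi_g(phi_{g^{-1}}(a_g) b_h) \<delta>_{gh}, extended bilinearly.\<close>
definition skew_mult ::
    "('g::group_add \<Rightarrow> 'x \<Rightarrow> 'x) \<Rightarrow> ('g \<Rightarrow> 'x set) \<Rightarrow>
     ('g \<Rightarrow> 'x \<Rightarrow> 'k::field) \<Rightarrow> ('g \<Rightarrow> 'x \<Rightarrow> 'k) \<Rightarrow> ('g \<Rightarrow> 'x \<Rightarrow> 'k)" where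
  "skew_mult phi Xg a b = (\<lambda>k x. \<Sum>g\<in>fsupp a.
      pact phi Xg g (\<lambda>y. pact phi Xg (- g) (a g) y * b (- g + k) y) x)"

definition skew_ideal ::
    "('g::group_add \<Rightarrow> 'x::topological_space \<Rightarrow> 'x) \<Rightarrow> ('g \<Rightarrow> 'x set) \<Rightarrow> ('g \<Rightarrow> 'x \<Rightarrow> 'k::field) set \<Rightarrow> bool" where
  "skew_ideal phi Xg I \<longleftrightarrow>
     I \<subseteq> skew_ring Xg UNIV \<and> (\<lambda>g x. 0) \<in> I \<and>
     (\<forall>a\<in>I. \<forall>b\<in>I. skew_add a b \<in> I) \<and> (\<forall>a\<in>I. skew_neg a \<in> I) \<and>
     (\<forall>a\<in>I. \<forall>r\<in>skew_ring Xg UNIV. skew_mult phi Xg r a \<in> I \<and> skew_mult phi Xg a r \<in> I)"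

definition hom_comp :: "'g \<Rightarrow> ('g \<Rightarrow> 'x \<Rightarrow> 'k::zero) \<Rightarrow> ('g \<Rightarrow> 'x \<Rightarrow> 'k)" where
  "hom_comp g a = (\<lambda>h. if h = g then a g else (\<lambda>_. 0))"

text \<open>Graded: I is the direct sum of its intersections with the homogeneous components,
  i.e. every homogeneous component of an element of I lies in I.\<close>
definition graded_ideal ::
    "('g::group_add \<Rightarrow> 'x::topological_space \<Rightarrow> 'x) \<Rightarrow> ('g \<Rightarrow> 'x set) \<Rightarrow> ('g \<Rightarrow> 'x \<Rightarrow> 'k::field) set \<Rightarrow> bool" where
  "graded_ideal phi Xg I \<longleftrightarrow> skew_ideal phi Xg I \<and> (\<forall>a\<in>I. \<forall>g. hom_comp g a \<in> I)"

end

theory Submission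
  imports Defs
begin

text \<open>
  For an open invariant set V the partial action carries functions supported in
  V \<inter> X_(g^-1) to functions supported in V \<inter> X_g, so C_K(V) \<rtimes> G is a graded ideal.
  Conversely, a graded ideal I determines the open set V_I of points at which the degree-zero
  coefficient of some element of I is nonzero. Multiplying a_g \<delta>_g \<in> I on the right by
  1_W \<delta>_(g^-1), with W a compact open neighbourhood of \<phi>_(g^-1)(x), moves the value a_g(x)
  into degree zero; hence I \<subseteq> C_K(V_I) \<rtimes> G. For the reverse inclusion, compactness writes
  a compact open U \<subseteq> V_I as a finite union of compact open sets on which some degree-zero
  coefficient is a nonzero constant; rescaling and 1_(W \<union> U) = 1_W + 1_(U - W) 1_U give
  1_U \<delta>_0 \<in> I, and then f \<delta>_g = (1_(supp f) \<delta>_0)(f \<delta>_g) \<in> I. A similar product shows that V_I is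
  invariant, and the basis of compact open sets recovers V from C_K(V) \<rtimes> G.
\<close>

section \<open>Locally constant functions with compact support\<close>

definition locally_constant :: "('a::topological_space \<Rightarrow> 'b) \<Rightarrow> bool" where
  "locally_constant f \<longleftrightarrow> (\<forall>x. \<exists>U. open U \<and> x \<in> U \<and> (\<forall>y\<in>U. f y = f x))"

lemma locally_constant_open_Collect:
  assumes "locally_constant f"
  shows "open {x. P (f x)}"
proof (rule Topological_Spaces.openI)
  fix x assume "x \<in> {x. P (f x)}"
  moreover obtain U where "open U" "x \<in> U" "\<forall>y\<in>U. f y = f x"
    using assms unfolding locally_constant_def by blast
  ultimately show "\<exists>T. open T \<and> x \<in> T \<and> T \<subseteq> {x. P (f x)}"
    by (intro exI[of _ U]) (metis (mono_tags, lifting) mem_Collect_eq subsetI)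
qed

lemma locally_constant_closed_Collect:
  assumes "locally_constant f"
  shows "closed {x. P (f x)}"
  using locally_constant_open_Collect[OF assms, of "\<lambda>v. \<not> P v"]
  by (simp add: closed_def Collect_neg_eq)

lemma locally_constant_compose2:
  assumes "locally_constant f" "locally_constant g"
  shows "locally_constant (\<lambda>x. h (f x) (g x))"
  unfolding locally_constant_def
proof
  fix x
  obtain U V where "open U" "x \<in> U" "\<forall>y\<in>U. f y = f x" "open V" "x \<in> V" "\<forall>y\<in>V. g y = g x"
    using assms unfolding locally_constant_def by meson
  moreover from this have "\<forall>y\<in>U \<inter> V. h (f y) (g y) = h (f x) (g x)"
    by (metis IntD1 IntD2)
  ultimately show "\<exists>W. open W \<and> x \<in> W \<and> (\<forall>y\<in>W. h (f y) (g y) = h (f x) (g x))"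
    by (meson IntI open_Int)
qed

lemma locally_constant_extend_by_zero:
  fixes F :: "'a::topological_space \<Rightarrow> 'b::zero" and h :: "'c::topological_space \<Rightarrow> 'a"
  assumes F: "locally_constant F" and U: "open U" and h: "continuous_on U h"
    and K: "closed K" "K \<subseteq> U" and vanish: "\<And>x. x \<in> U \<Longrightarrow> x \<notin> K \<Longrightarrow> F (h x) = 0"
  shows "locally_constant (\<lambda>x. if x \<in> U then F (h x) else 0)"
  unfolding locally_constant_def
proof
  fix x
  show "\<exists>W. open W \<and> x \<in> W \<and>
      (\<forall>y\<in>W. (if y \<in> U then F (h y) else 0) = (if x \<in> U then F (h x) else 0))"
  proof (cases "x \<in> U")
    case True
    obtain B where B: "open B" "h x \<in> B" "\<forall>z\<in>B. F z = F (h x)"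
      using F unfolding locally_constant_def by blast
    have "open (h -` B \<inter> U)"
      using h U B(1) by (simp add: continuous_on_open_vimage)
    moreover have "\<forall>y\<in>h -` B \<inter> U. F (h y) = F (h x)"
      using B(3) by blast
    ultimately show ?thesis
      using True B(2) by (intro exI[of _ "h -` B \<inter> U"]) (metis IntD2 IntI vimageI)
  next
    case False
    with K vanish show ?thesis
      by (intro exI[of _ "- K"]) auto
  qed
qed

lemma CK_iff:
  "f \<in> CK W \<longleftrightarrow> locally_constant f \<and> (\<exists>C. compact C \<and> (\<forall>x. x \<notin> C \<longrightarrow> f x = 0))
                 \<and> (\<forall>x. x \<notin> W \<longrightarrow> f x = 0)"
  unfolding CK_def locally_constant_def by simp

lemma CK_I:
  assumes "locally_constant f" "compact C" "\<And>x. x \<notin> C \<Longrightarrow> f x = 0" "\<And>x. x \<notin> W \<Longrightarrow> f x = 0"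
  shows "f \<in> CK W"
  using assms unfolding CK_iff by metis

lemma CK_E:
  assumes "f \<in> CK W"
  obtains C where "locally_constant f" "compact C" "\<And>x. x \<notin> C \<Longrightarrow> f x = 0"
    "\<And>x. x \<notin> W \<Longrightarrow> f x = 0"
  using assms unfolding CK_iff by metis

lemma CK_mono: "f \<in> CK A \<Longrightarrow> A \<subseteq> B \<Longrightarrow> f \<in> CK B"
  unfolding CK_iff by (meson subsetD)

lemma CK_Int:
  assumes "f \<in> CK A" "\<And>x. x \<notin> B \<Longrightarrow> f x = 0"
  shows "f \<in> CK (B \<inter> A)"
proof -
  obtain C where "locally_constant f" "compact C" "\<And>x. x \<notin> C \<Longrightarrow> f x = 0"
    "\<And>x. x \<notin> A \<Longrightarrow> f x = 0"
    using assms(1) by (elim CK_E) blast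
  with assms(2) show ?thesis
    by (intro CK_I[of _ C]) auto
qed

lemma zero_in_CK: "(\<lambda>_. 0) \<in> CK W"
  by (rule CK_I[of _ "{}"]) (auto simp: locally_constant_def)

lemma CK_compose:
  assumes "f \<in> CK W" "h 0 = 0"
  shows "(\<lambda>x. h (f x)) \<in> CK W"
proof -
  obtain C where "locally_constant f" "compact C" "\<And>x. x \<notin> C \<Longrightarrow> f x = 0"
    "\<And>x. x \<notin> W \<Longrightarrow> f x = 0"
    using assms(1) by (elim CK_E) blast
  with assms(2) show ?thesis
    by (intro CK_I[of _ C] locally_constant_compose2[of f f "\<lambda>u v. h u", simplified]) auto
qed

lemma CK_add:
  assumes "f \<in> CK W" "g \<in> CK W"
  shows "(\<lambda>x. f x + g x) \<in> CK W"
proof -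
  obtain C where "locally_constant f" "compact C" "\<And>x. x \<notin> C \<Longrightarrow> f x = 0"
    "\<And>x. x \<notin> W \<Longrightarrow> f x = 0"
    using assms(1) by (elim CK_E) blast
  moreover obtain D where "locally_constant g" "compact D" "\<And>x. x \<notin> D \<Longrightarrow> g x = 0"
    "\<And>x. x \<notin> W \<Longrightarrow> g x = 0"
    using assms(2) by (elim CK_E) blast
  ultimately show ?thesis
    by (intro CK_I[of _ "C \<union> D"] locally_constant_compose2[of f g "(+)"]) auto
qed

lemma CK_mult:
  assumes "f \<in> CK A" "g \<in> CK B"
  shows "(\<lambda>x. f x * g x) \<in> CK (A \<inter> B)"
proof -
  obtain C where "locally_constant f" "compact C" "\<And>x. x \<notin> C \<Longrightarrow> f x = 0"
    "\<And>x. x \<notin> A \<Longrightarrow> f x = 0"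
    using assms(1) by (elim CK_E) blast
  moreover obtain D where "locally_constant g" "\<And>x. x \<notin> B \<Longrightarrow> g x = 0"
    using assms(2) by (elim CK_E) blast
  ultimately show ?thesis
    by (intro CK_I[of _ C] locally_constant_compose2[of f g "(*)"]) auto
qed

lemma CK_sum:
  "finite F \<Longrightarrow> (\<And>g. g \<in> F \<Longrightarrow> f g \<in> CK W) \<Longrightarrow> (\<lambda>x. \<Sum>g\<in>F. f g x) \<in> CK W"
  by (induction F rule: finite_induct) (simp_all add: zero_in_CK CK_add)

lemma compact_support_CK:
  assumes "f \<in> CK W"
  shows "compact {x. f x \<noteq> 0}"
proof -
  obtain C where C: "locally_constant f" "compact C" "\<And>x. x \<notin> C \<Longrightarrow> f x = 0"
    using assms by (elim CK_E) blast
  then have "compact (C \<inter> {x. f x \<noteq> 0})"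
    by (intro compact_Int_closed locally_constant_closed_Collect)
  moreover have "C \<inter> {x. f x \<noteq> 0} = {x. f x \<noteq> 0}"
    using C by auto
  ultimately show ?thesis
    by simp
qed

lemma open_support_CK: "f \<in> CK W \<Longrightarrow> open {x. f x \<noteq> 0}"
  by (erule CK_E) (rule locally_constant_open_Collect)

lemma support_CK_subset: "f \<in> CK W \<Longrightarrow> {x. f x \<noteq> 0} \<subseteq> W"
  by (erule CK_E) auto

lemma indicator_in_CK:
  fixes U :: "'a::t2_space set"
  assumes "compact U" "open U" "U \<subseteq> W"
  shows "(indicator U :: 'a \<Rightarrow> 'k::field) \<in> CK W"
proof (rule CK_I[of _ U])
  have "open (- U)"
    using assms(1) by (simp add: compact_imp_closed open_Compl)
  then show "locally_constant (indicator U :: 'a \<Rightarrow> 'k)"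
    using assms(2) unfolding locally_constant_def
    by (metis ComplD ComplI indicator_simps(1,2))
qed (use assms in \<open>auto simp: indicator_def\<close>)

section \<open>The partial skew group ring\<close>

text \<open>\<open>skew_monomial g f\<close> is the element f \<delta>_g.\<close>

abbreviation skew_monomial :: "'g \<Rightarrow> ('x \<Rightarrow> 'k::zero) \<Rightarrow> 'g \<Rightarrow> 'x \<Rightarrow> 'k" where
  "skew_monomial g f \<equiv> hom_comp g (\<lambda>_. f)"

lemma hom_comp_eq_monomial: "hom_comp g a = skew_monomial g (a g)"
  by (auto simp: hom_comp_def)

lemma fsupp_monomial: "fsupp (skew_monomial g f) \<subseteq> {g}"
  unfolding fsupp_def hom_comp_def by auto

lemma monomial_in_skew_ring: "f \<in> CK (V \<inter> Xg g) \<Longrightarrow> skew_monomial g f \<in> skew_ring Xg V"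
  unfolding skew_ring_def
  using finite_subset[OF fsupp_monomial] zero_in_CK by (auto simp: hom_comp_def)

lemma skew_ring_mono: "V \<subseteq> W \<Longrightarrow> skew_ring Xg V \<subseteq> skew_ring Xg W"
  unfolding skew_ring_def by (blast intro: CK_mono)

lemma zero_in_skew_ring: "(\<lambda>g x. 0) \<in> skew_ring Xg V"
  unfolding skew_ring_def fsupp_def by (simp add: zero_in_CK)

lemma skew_add_in_skew_ring:
  assumes "a \<in> skew_ring Xg V" "b \<in> skew_ring Xg V"
  shows "skew_add a b \<in> skew_ring Xg V"
proof -
  have "fsupp (skew_add a b) \<subseteq> fsupp a \<union> fsupp b"
    unfolding fsupp_def skew_add_def by auto
  with assms show ?thesis
    unfolding skew_ring_def skew_add_def by (auto intro: CK_add finite_subset)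
qed

lemma skew_neg_in_skew_ring:
  assumes "a \<in> skew_ring Xg V"
  shows "skew_neg a \<in> skew_ring Xg V"
proof -
  have "fsupp (skew_neg a) = fsupp a"
    unfolding fsupp_def skew_neg_def fun_eq_iff by simp
  with assms show ?thesis
    unfolding skew_ring_def by (auto simp: skew_neg_def intro: CK_compose)
qed

lemma hom_comp_in_skew_ring: "a \<in> skew_ring Xg V \<Longrightarrow> hom_comp g a \<in> skew_ring Xg V"
  unfolding hom_comp_eq_monomial[of g a] by (rule monomial_in_skew_ring) (simp add: skew_ring_def)

lemma skew_add_monomials:
  "skew_add (skew_monomial g f) (skew_monomial g u) = skew_monomial g (\<lambda>x. f x + u x)"
  unfolding skew_add_def hom_comp_def by auto

lemma skew_ring_subset_if_monomials:
  assumes zero: "(\<lambda>g x. 0) \<in> S" and add: "\<And>a b. a \<in> S \<Longrightarrow> b \<in> S \<Longrightarrow> skew_add a b \<in> S"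
    and monomial: "\<And>g f. f \<in> CK (V \<inter> Xg g) \<Longrightarrow> skew_monomial g f \<in> S"
  shows "skew_ring Xg V \<subseteq> S"
proof
  have "a \<in> S" if "finite F" "a \<in> skew_ring Xg V" "fsupp a \<subseteq> F" for F a
    using that
  proof (induction F arbitrary: a rule: finite_induct)
    case empty
    then have "a = (\<lambda>g x. 0)"
      unfolding fsupp_def by auto
    with zero show ?case
      by simp
  next
    case (insert g F)
    define a' where "a' = a(g := (\<lambda>_. 0))"
    have "a' \<in> skew_ring Xg V"
      using insert.prems(1) unfolding skew_ring_def a'_def fsupp_def
      by (auto simp: zero_in_CK elim: rev_finite_subset)
    moreover have "fsupp a' \<subseteq> F"
      using insert.prems(2) unfolding a'_def fsupp_def by auto
    ultimately have "a' \<in> S"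
      by (rule insert.IH)
    moreover have "skew_monomial g (a g) \<in> S"
      using insert.prems(1) unfolding skew_ring_def by (blast intro: monomial)
    moreover have "skew_add (skew_monomial g (a g)) a' = a"
      unfolding skew_add_def hom_comp_def a'_def by auto
    ultimately show ?case
      using add by metis
  qed
  then show "a \<in> S" if "a \<in> skew_ring Xg V" for a
    using that unfolding skew_ring_def by blast
qed

lemma pact_zero_fun: "pact phi Xg g (\<lambda>_. 0) = (\<lambda>_. 0)"
  by (simp add: pact_def)

lemma fsupp_skew_mult_subset:
  "fsupp (skew_mult phi Xg a b) \<subseteq> (\<lambda>(g, h). g + h) ` (fsupp a \<times> fsupp b)"
proof
  fix k assume k: "k \<in> fsupp (skew_mult phi Xg a b)"
  have "\<exists>g\<in>fsupp a. - g + k \<in> fsupp b"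
  proof (rule ccontr)
    assume "\<not> (\<exists>g\<in>fsupp a. - g + k \<in> fsupp b)"
    then have "b (- g + k) = (\<lambda>_. 0)" if "g \<in> fsupp a" for g
      using that unfolding fsupp_def by blast
    then have "skew_mult phi Xg a b k = (\<lambda>_. 0)"
      unfolding skew_mult_def fun_eq_iff by (intro allI sum.neutral ballI) (simp add: pact_def)
    with k show False
      unfolding fsupp_def by simp
  qed
  then obtain g where "g \<in> fsupp a" "- g + k \<in> fsupp b"
    by blast
  then show "k \<in> (\<lambda>(g, h). g + h) ` (fsupp a \<times> fsupp b)"
    by (auto intro!: image_eqI[of _ _ "(g, - g + k)"] simp: add.assoc[symmetric])
qed

lemma skew_mult_monomial_left:
  "skew_mult phi Xg (skew_monomial g f) b
     = (\<lambda>k. pact phi Xg g (\<lambda>y. pact phi Xg (- g) f y * b (- g + k) y))"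
proof (cases "f = (\<lambda>_. 0)")
  case True
  then have "fsupp (skew_monomial g f) = {}"
    unfolding fsupp_def hom_comp_def by auto
  with True show ?thesis
    unfolding skew_mult_def by (simp add: pact_def)
next
  case False
  then have "fsupp (skew_monomial g f) = {g}"
    unfolding fsupp_def hom_comp_def by auto
  then show ?thesis
    unfolding skew_mult_def by (simp add: hom_comp_def)
qed

lemma skew_mult_monomials:
  "skew_mult phi Xg (skew_monomial g f) (skew_monomial h u)
     = skew_monomial (g + h) (pact phi Xg g (\<lambda>y. pact phi Xg (- g) f y * u y))"
proof
  fix k
  have "- g + k = h \<longleftrightarrow> k = g + h"
    by (metis add_minus_cancel minus_add_cancel)
  then show "skew_mult phi Xg (skew_monomial g f) (skew_monomial h u) k
      = skew_monomial (g + h) (pact phi Xg g (\<lambda>y. pact phi Xg (- g) f y * u y)) k"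
    unfolding skew_mult_monomial_left by (auto simp: hom_comp_def pact_zero_fun)
qed

section \<open>Partial actions\<close>

locale topological_partial_action =
  fixes phi :: "'g::group_add \<Rightarrow> 'x::t2_space \<Rightarrow> 'x" and Xg :: "'g \<Rightarrow> 'x set"
  assumes partial_action: "partial_action phi Xg"
begin

lemma open_Xg: "open (Xg g)"
  using partial_action unfolding partial_action_def by blast

lemma Xg_0 [simp]: "Xg 0 = UNIV"
  using partial_action unfolding partial_action_def by blast

lemma phi_0 [simp]: "phi 0 x = x"
  using partial_action unfolding partial_action_def by blast

lemma homeomorphism_phi: "\<exists>psi. homeomorphism (Xg (- g)) (Xg g) (phi g) psi"
  using partial_action unfolding partial_action_def by blast

lemma continuous_on_phi: "continuous_on (Xg (- g)) (phi g)"
  using homeomorphism_phi[of g] unfolding homeomorphism_def by blast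

lemma phi_in_Xg: "x \<in> Xg (- g) \<Longrightarrow> phi g x \<in> Xg g"
  using homeomorphism_phi[of g] unfolding homeomorphism_def by blast

lemma phi_image: "phi g ` (Xg (- g) \<inter> Xg h) = Xg g \<inter> Xg (g + h)"
  using partial_action unfolding partial_action_def by blast

lemma phi_phi_minus:
  assumes "x \<in> Xg g"
  shows "phi g (phi (- g) x) = x"
proof -
  have "x \<in> Xg (- (- g)) \<inter> Xg (- (- g) + - g)"
    using assms by simp
  then have "phi g (phi (- g) x) = phi (g + - g) x"
    using partial_action unfolding partial_action_def by blast
  then show ?thesis
    by simp
qed

lemma pact_0 [simp]: "pact phi Xg 0 F = F"
  by (simp add: pact_def)

lemma skew_mult_degree0_monomials:
  "skew_mult phi Xg (skew_monomial 0 f) (skew_monomial g u) = skew_monomial g (\<lambda>x. f x * u x)"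
  by (simp add: skew_mult_monomials)

lemma pact_CK:
  assumes F: "F \<in> CK S" and S: "S \<subseteq> Xg (- g)"
  shows "pact phi Xg g F \<in> CK (phi g ` S)"
proof -
  define D where "D = {y. F y \<noteq> 0}"
  define K where "K = phi g ` D"
  have "compact D" "D \<subseteq> S"
    unfolding D_def using F by (rule compact_support_CK, rule support_CK_subset)
  moreover from this have "continuous_on D (phi g)"
    using S continuous_on_phi continuous_on_subset by blast
  ultimately have "compact K" "K \<subseteq> phi g ` S" "K \<subseteq> Xg g"
    unfolding K_def using S phi_in_Xg by (auto intro: compact_continuous_image)
  have vanish: "F (phi (- g) x) = 0" if "x \<in> Xg g" "x \<notin> K" for x
  proof (rule ccontr)
    assume "F (phi (- g) x) \<noteq> 0"
    then have "phi g (phi (- g) x) \<in> K"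
      unfolding K_def D_def by blast
    with that show False
      by (simp add: phi_phi_minus)
  qed
  have "locally_constant (pact phi Xg g F)"
    unfolding pact_def
  proof (rule locally_constant_extend_by_zero)
    show "locally_constant F"
      using F by (elim CK_E)
    show "continuous_on (Xg g) (phi (- g))"
      using continuous_on_phi[of "- g"] by simp
    show "closed K"
      using \<open>compact K\<close> by (rule compact_imp_closed)
  qed (use open_Xg \<open>K \<subseteq> Xg g\<close> vanish in auto)
  then show ?thesis
    using \<open>compact K\<close> \<open>K \<subseteq> phi g ` S\<close> vanish
    by (intro CK_I[of _ K]) (auto simp: pact_def)
qed

lemma invariant_set_UNIV: "invariant_set phi Xg UNIV"
  unfolding invariant_set_def using phi_in_Xg[of _ "- g" for g] by auto

lemma invariant_set_Int:
  "invariant_set phi Xg A \<Longrightarrow> invariant_set phi Xg B \<Longrightarrow> invariant_set phi Xg (A \<inter> B)"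
  unfolding invariant_set_def by blast

lemma phi_image_invariant: "invariant_set phi Xg V \<Longrightarrow> phi g ` (V \<inter> Xg (- g)) \<subseteq> V"
  unfolding invariant_set_def by (metis Int_commute le_infE minus_minus)

lemma pact_CK_invariant:
  assumes V: "invariant_set phi Xg V" and F: "F \<in> CK (V \<inter> Xg (- g) \<inter> Xg (- g + k))"
  shows "pact phi Xg g F \<in> CK (V \<inter> Xg g \<inter> Xg k)"
proof -
  have "phi g ` (V \<inter> Xg (- g) \<inter> Xg (- g + k)) \<subseteq> Xg g \<inter> Xg (g + (- g + k))"
    using phi_image[of g "- g + k"] by blast
  moreover have "phi g ` (V \<inter> Xg (- g) \<inter> Xg (- g + k)) \<subseteq> V"
    using phi_image_invariant[OF V, of g] by blast
  ultimately have "phi g ` (V \<inter> Xg (- g) \<inter> Xg (- g + k)) \<subseteq> V \<inter> Xg g \<inter> Xg k"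
    by (auto simp: add.assoc[symmetric])
  with pact_CK[OF F] show ?thesis
    by (blast intro: CK_mono)
qed

lemma skew_mult_in_skew_ring:
  assumes A: "invariant_set phi Xg A" and B: "invariant_set phi Xg B"
    and a: "a \<in> skew_ring Xg A" and b: "b \<in> skew_ring Xg B"
  shows "skew_mult phi Xg a b \<in> skew_ring Xg (A \<inter> B)"
proof -
  have "finite (fsupp a)" "finite (fsupp b)"
    using a b unfolding skew_ring_def by auto
  then have "finite (fsupp (skew_mult phi Xg a b))"
    by (intro finite_subset[OF fsupp_skew_mult_subset] finite_imageI finite_SigmaI)
  moreover have "skew_mult phi Xg a b k \<in> CK (A \<inter> B \<inter> Xg k)" for k
  proof -
    have "pact phi Xg g (\<lambda>y. pact phi Xg (- g) (a g) y * b (- g + k) y) \<in> CK (A \<inter> B \<inter> Xg k)" for g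
    proof -
      have "pact phi Xg (- g) (a g) \<in> CK (A \<inter> Xg (- g) \<inter> Xg (- g))"
        using a pact_CK_invariant[OF A, of "a g" "- g" "- g"] unfolding skew_ring_def by simp
      moreover have "b (- g + k) \<in> CK (B \<inter> Xg (- g + k))"
        using b unfolding skew_ring_def by blast
      ultimately have "(\<lambda>y. pact phi Xg (- g) (a g) y * b (- g + k) y)
          \<in> CK (A \<inter> B \<inter> Xg (- g) \<inter> Xg (- g + k))"
        by (blast intro: CK_mult CK_mono)
      then show ?thesis
        by (blast intro: pact_CK_invariant[OF invariant_set_Int[OF A B]] CK_mono)
    qed
    with \<open>finite (fsupp a)\<close> show ?thesis
      unfolding skew_mult_def by (intro CK_sum)
  qed
  ultimately show ?thesis
    unfolding skew_ring_def by blast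
qed

lemma graded_ideal_skew_ring:
  assumes "invariant_set phi Xg V"
  shows "graded_ideal phi Xg (skew_ring Xg V)"
  unfolding graded_ideal_def skew_ideal_def
  using skew_ring_mono[of V UNIV Xg] zero_in_skew_ring skew_add_in_skew_ring skew_neg_in_skew_ring
    skew_mult_in_skew_ring[OF invariant_set_UNIV assms] skew_mult_in_skew_ring[OF assms invariant_set_UNIV]
    hom_comp_in_skew_ring
  by auto

end

section \<open>Graded ideals\<close>

definition degree0_support :: "('g::zero \<Rightarrow> 'x \<Rightarrow> 'k::zero) set \<Rightarrow> 'x set" where
  "degree0_support I = {x. \<exists>a\<in>I. a 0 x \<noteq> 0}"

locale ample_partial_action = topological_partial_action phi Xg
  for phi :: "'g::group_add \<Rightarrow> 'x::t2_space \<Rightarrow> 'x" and Xg :: "'g \<Rightarrow> 'x set" +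
  assumes compact_open_basis: "has_compact_open_basis TYPE('x)"
begin

lemma compact_open_nbhd:
  assumes "open U" "x \<in> U"
  obtains W where "open W" "compact W" "x \<in> W" "W \<subseteq> (U :: 'x set)"
  using compact_open_basis assms unfolding has_compact_open_basis_def by meson

lemma degree0_support_skew_ring:
  assumes "open V"
  shows "degree0_support (skew_ring Xg V) = V" (is "degree0_support ?R = V")
proof
  show "degree0_support ?R \<subseteq> V"
    unfolding degree0_support_def skew_ring_def using support_CK_subset by fastforce
  show "V \<subseteq> degree0_support ?R"
  proof
    fix x assume "x \<in> V"
    with assms obtain W where "open W" "compact W" "x \<in> W" "W \<subseteq> V"
      by (rule compact_open_nbhd)
    then have "skew_monomial 0 (indicator W) \<in> ?R"
      by (intro monomial_in_skew_ring indicator_in_CK) auto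
    with \<open>x \<in> W\<close> show "x \<in> degree0_support ?R"
      unfolding degree0_support_def
      by (intro CollectI bexI[of _ "skew_monomial 0 (indicator W)"]) (simp_all add: hom_comp_def)
  qed
qed

context
  fixes I :: "('g \<Rightarrow> 'x \<Rightarrow> 'k::field) set"
  assumes graded: "graded_ideal phi Xg I"
begin

lemma
  shows ideal_subset_skew_ring: "I \<subseteq> skew_ring Xg UNIV"
    and ideal_zero: "(\<lambda>g x. 0) \<in> I"
    and ideal_add: "a \<in> I \<Longrightarrow> b \<in> I \<Longrightarrow> skew_add a b \<in> I"
    and ideal_mult_left: "a \<in> I \<Longrightarrow> r \<in> skew_ring Xg UNIV \<Longrightarrow> skew_mult phi Xg r a \<in> I"
    and ideal_mult_right: "a \<in> I \<Longrightarrow> r \<in> skew_ring Xg UNIV \<Longrightarrow> skew_mult phi Xg a r \<in> I"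
    and ideal_hom_comp: "a \<in> I \<Longrightarrow> hom_comp g a \<in> I"
  using graded unfolding graded_ideal_def skew_ideal_def by blast+

lemma ideal_component_CK: "a \<in> I \<Longrightarrow> a g \<in> CK (Xg g)"
  using ideal_subset_skew_ring unfolding skew_ring_def by auto

lemma open_degree0_support: "open (degree0_support I)"
proof -
  have "degree0_support I = (\<Union>a\<in>I. {x. a 0 x \<noteq> 0})"
    unfolding degree0_support_def by blast
  moreover have "open {x. a 0 x \<noteq> 0}" if "a \<in> I" for a
    using ideal_component_CK[OF that] by (rule open_support_CK)
  ultimately show ?thesis
    by (simp add: open_UN)
qed

lemma ideal_subset_skew_ring_degree0_support: "I \<subseteq> skew_ring Xg (degree0_support I)"
proof
  fix a assume a: "a \<in> I"
  have "a g x = 0" if "x \<notin> degree0_support I" for g x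
  proof (rule ccontr)
    assume "a g x \<noteq> 0"
    then have x: "x \<in> Xg g"
      using support_CK_subset[OF ideal_component_CK[OF a]] by blast
    define z where "z = phi (- g) x"
    have "z \<in> Xg (- g)"
      using phi_in_Xg[of x "- g"] x by (simp add: z_def)
    with open_Xg obtain W where W: "open W" "compact W" "z \<in> W" "W \<subseteq> Xg (- g)"
      by (rule compact_open_nbhd)
    define p where "p = skew_mult phi Xg (hom_comp g a) (skew_monomial (- g) (indicator W))"
    have "p \<in> I"
      unfolding p_def using W
      by (intro ideal_mult_right ideal_hom_comp a monomial_in_skew_ring indicator_in_CK) auto
    moreover have "phi g z = x"
      using x by (simp add: z_def phi_phi_minus)
    with x \<open>z \<in> Xg (- g)\<close> \<open>z \<in> W\<close> have "p 0 x = a g x"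
      unfolding p_def hom_comp_eq_monomial[of g a] skew_mult_monomials
      by (simp add: hom_comp_def pact_def z_def[symmetric])
    ultimately show False
      using that \<open>a g x \<noteq> 0\<close> unfolding degree0_support_def by auto
  qed
  then show "a \<in> skew_ring Xg (degree0_support I)"
    using a ideal_subset_skew_ring ideal_component_CK unfolding skew_ring_def
    by (auto intro: CK_Int)
qed

lemma degree0_monomial_mult_in_ideal:
  assumes "skew_monomial 0 f \<in> I" "h \<in> CK UNIV"
  shows "skew_monomial 0 (\<lambda>x. h x * f x) \<in> I"
  using ideal_mult_left[OF assms(1), of "skew_monomial 0 h"] monomial_in_skew_ring[of h UNIV Xg 0] assms(2)
  by (simp add: skew_mult_degree0_monomials)

lemma indicator_Union_in_ideal:
  assumes "finite D" "\<And>W. W \<in> D \<Longrightarrow> open W \<and> compact W \<and> skew_monomial 0 (indicator W) \<in> I"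
  shows "skew_monomial 0 (indicator (\<Union>D)) \<in> I"
  using assms
proof (induction D rule: finite_induct)
  case empty
  then show ?case
    using ideal_zero by (simp add: hom_comp_def fun_eq_iff)
next
  case (insert W D)
  let ?U = "\<Union>D"
  have "compact ?U" "open ?U" "open W" "compact W"
    using insert by auto
  then have "compact (?U - W)" "open (?U - W)"
    by (simp_all add: Diff_eq compact_Int_closed closed_Compl open_Diff[unfolded Diff_eq]
        compact_imp_closed)
  then have "indicator (?U - W) \<in> CK UNIV"
    by (intro indicator_in_CK) auto
  then have "skew_monomial 0 (\<lambda>x. indicator (?U - W) x * indicator ?U x) \<in> I"
    using insert by (intro degree0_monomial_mult_in_ideal) auto
  then have "skew_add (skew_monomial 0 (indicator W))
      (skew_monomial 0 (\<lambda>x. indicator (?U - W) x * indicator ?U x)) \<in> I"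
    using insert by (intro ideal_add) auto
  moreover have "(\<lambda>x. indicator W x + indicator (?U - W) x * indicator ?U x)
      = (indicator (\<Union>(insert W D)) :: 'x \<Rightarrow> 'k)"
    by (auto simp: indicator_def)
  ultimately show ?case
    by (simp add: skew_add_monomials)
qed

lemma indicator_in_ideal:
  assumes U: "compact U" "open U" "U \<subseteq> degree0_support I"
  shows "skew_monomial 0 (indicator U) \<in> I"
proof -
  define C where "C = {W. open W \<and> compact W \<and> W \<subseteq> U \<and> skew_monomial 0 (indicator W) \<in> I}"
  have "U \<subseteq> \<Union>C"
  proof
    fix x assume "x \<in> U"
    then obtain a where a: "a \<in> I" "a 0 x \<noteq> 0"
      using U(3) unfolding degree0_support_def by blast
    define W where "W = U \<inter> {y. a 0 y = a 0 x}"
    have "locally_constant (a 0)"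
      using ideal_component_CK[OF a(1), of 0] by (elim CK_E)
    then have "open {y. a 0 y = a 0 x}" "closed {y. a 0 y = a 0 x}"
      by (rule locally_constant_open_Collect, rule locally_constant_closed_Collect)
    then have "open W" "compact W"
      unfolding W_def using U by (blast intro: open_Int, blast intro: compact_Int_closed)
    then have "(\<lambda>y. indicator W y * inverse (a 0 x)) \<in> CK UNIV"
      using CK_compose[OF indicator_in_CK[of W UNIV], of "\<lambda>v. v * inverse (a 0 x)"] by simp
    moreover have "skew_monomial 0 (a 0) \<in> I"
      using ideal_hom_comp[OF a(1), of 0] by (simp only: hom_comp_eq_monomial[of 0 a])
    ultimately have "skew_monomial 0 (\<lambda>y. indicator W y * inverse (a 0 x) * a 0 y) \<in> I"
      by (intro degree0_monomial_mult_in_ideal)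
    moreover have "(\<lambda>y. indicator W y * inverse (a 0 x) * a 0 y) = indicator W"
      using a(2) by (auto simp: indicator_def W_def)
    moreover have "W \<subseteq> U"
      unfolding W_def by blast
    ultimately have "W \<in> C"
      unfolding C_def using \<open>open W\<close> \<open>compact W\<close> by simp
    moreover have "x \<in> W"
      unfolding W_def using \<open>x \<in> U\<close> by simp
    ultimately show "x \<in> \<Union>C"
      by blast
  qed
  moreover have "\<And>B. B \<in> C \<Longrightarrow> open B"
    unfolding C_def by blast
  ultimately obtain D where D: "D \<subseteq> C" "finite D" "U \<subseteq> \<Union>D"
    by (rule compactE[OF U(1)])
  then have "\<Union>D = U"
    unfolding C_def by blast
  with D show ?thesis
    using indicator_Union_in_ideal[of D] unfolding C_def by auto
qed

lemma monomial_in_ideal: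
  assumes f: "f \<in> CK (degree0_support I \<inter> Xg g)"
  shows "skew_monomial g f \<in> I"
proof -
  define T where "T = {x. f x \<noteq> 0}"
  have "compact T" "open T" "T \<subseteq> degree0_support I"
    unfolding T_def using compact_support_CK[OF f] open_support_CK[OF f] support_CK_subset[OF f]
    by auto
  then have "skew_monomial 0 (indicator T) \<in> I"
    by (rule indicator_in_ideal)
  moreover have "skew_monomial g f \<in> skew_ring Xg UNIV"
    using f by (intro monomial_in_skew_ring) (auto intro: CK_mono)
  ultimately have "skew_mult phi Xg (skew_monomial 0 (indicator T)) (skew_monomial g f) \<in> I"
    by (rule ideal_mult_right)
  moreover have "(\<lambda>x. indicator T x * f x) = f"
    unfolding T_def by (auto simp: indicator_def)
  ultimately show ?thesis
    by (simp add: skew_mult_degree0_monomials)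
qed

lemma skew_ring_degree0_support: "skew_ring Xg (degree0_support I) = I"
  by (intro equalityI skew_ring_subset_if_monomials ideal_zero ideal_add monomial_in_ideal
      ideal_subset_skew_ring_degree0_support)

lemma invariant_degree0_support: "invariant_set phi Xg (degree0_support I)"
  unfolding invariant_set_def
proof (intro allI subsetI)
  fix g z assume "z \<in> phi (- g) ` (Xg g \<inter> degree0_support I)"
  then obtain x where x: "x \<in> Xg g" "x \<in> degree0_support I" and z: "z = phi (- g) x"
    by blast
  have "z \<in> Xg (- g)"
    using phi_in_Xg[of x "- g"] x z by simp
  have "open (Xg g \<inter> degree0_support I)" "x \<in> Xg g \<inter> degree0_support I"
    using open_Xg open_degree0_support x by auto
  then obtain U where U: "open U" "compact U" "x \<in> U" "U \<subseteq> Xg g \<inter> degree0_support I"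
    by (rule compact_open_nbhd)
  obtain W where W: "open W" "compact W" "z \<in> W" "W \<subseteq> Xg (- g)"
    using open_Xg \<open>z \<in> Xg (- g)\<close> by (rule compact_open_nbhd)
  define p :: "'g \<Rightarrow> 'x \<Rightarrow> 'k"
    where "p = skew_mult phi Xg (skew_monomial (- g) (indicator W)) (skew_monomial g (indicator U))"
  have "p \<in> I"
    unfolding p_def using U W
    by (intro ideal_mult_left monomial_in_ideal monomial_in_skew_ring indicator_in_CK) auto
  moreover have "phi g z = x"
    using x z by (simp add: phi_phi_minus)
  with x \<open>z \<in> Xg (- g)\<close> U(3) W(3) have "p 0 z = 1"
    unfolding p_def skew_mult_monomials by (simp add: hom_comp_def pact_def z[symmetric])
  ultimately have "z \<in> degree0_support I"
    unfolding degree0_support_def by (metis (mono_tags) mem_Collect_eq one_neq_zero)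
  with \<open>z \<in> Xg (- g)\<close> show "z \<in> Xg (- g) \<inter> degree0_support I"
    by blast
qed

end

end

theorem mainTheorem10:
  fixes phi :: "'g::group_add \<Rightarrow> 'x::t2_space \<Rightarrow> 'x"
    and Xg :: "'g \<Rightarrow> 'x set"
  assumes "locally_compact_Hausdorff_space TYPE('x)"
    and "has_compact_open_basis TYPE('x)"
    and "partial_action phi Xg"
  shows "bij_betw (\<lambda>V. skew_ring Xg V :: ('g \<Rightarrow> 'x \<Rightarrow> 'k::field) set)
           {V. open V \<and> invariant_set phi Xg V}
           {I. graded_ideal phi Xg I}"
proof -
  \<comment> \<open>Local compactness follows from the compact-open basis.\<close>
  interpret ample_partial_action phi Xg
    using assms(2,3) by unfold_locales
  show ?thesis
  proof (rule bij_betw_byWitness[where f' = degree0_support])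
    show "\<forall>V\<in>{V. open V \<and> invariant_set phi Xg V}.
        degree0_support (skew_ring Xg V :: ('g \<Rightarrow> 'x \<Rightarrow> 'k) set) = V"
      using degree0_support_skew_ring by blast
    show "\<forall>I\<in>{I. graded_ideal phi Xg I}. skew_ring Xg (degree0_support I) = I"
      using skew_ring_degree0_support by blast
    show "(\<lambda>V. skew_ring Xg V) ` {V. open V \<and> invariant_set phi Xg V} \<subseteq> {I. graded_ideal phi Xg I}"
      using graded_ideal_skew_ring by blast
    show "degree0_support ` {I. graded_ideal phi Xg I} \<subseteq> {V. open V \<and> invariant_set phi Xg V}"
      using open_degree0_support invariant_degree0_support by blast
  qed
qed

end
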